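(* Let $\mathcal{N}=\{1,\dots,N\}$, $K\ge1$, $M\ge0$, and let $\underline{\mathsf{d}}$ be uniformly distributed over $\mathcal{N}^K$. For any $s\in\{1,2,\dots,\min\{N,K\}\}$, \[ \bar{R}(M,\mathcal{N},K)\ge \Pr\bigl(w(\underline{\mathsf{d}})\ge s\bigr)\,\bar{R}_s(M,\mathcal{N},s). \]
   Context: Caching problem: a server holds $N$ files of $F$ bits each, connected through a shared error-free link to $K$ users each with a cache of $MF$ bits. In the placement phase each user stores an arbitrary function of the files of at most $MF$ bits; in the delivery phase the users' demand vector $\underline{d}\in\mathcal{N}^K$ is revealed, the server sends a message over the shared link, and each user must reconstruct its requested file from the message and its cache. The rate is message length divided by $F$. $\bar{R}(M,\mathcal{N},K)$ is the optimal expected rate (infimum over all schemes of the expected rate, achievable with vanishing error probability for all large $F$) when the demand vector is uniform over $\mathcal{N}^K$. For a vector $\underline{d}$, $w(\underline{d})$ is the number of distinct entries of $\underline{d}$. For $s\in\{1,\dots,\min\{N,K\}\}$, $\bar{R}_s(M,\mathcal{N},K)$ is the optimal expected rate when the demand vector is uniform over $\mathcal{N}^K$ conditioned on $w(\underline{d})=s$ (both placement and delivery optimized for this conditional distribution). In particular, $\bar{R}_s(M,\mathcal{N},s)$ is the optimal expected rate for $s$ users requesting files chosen uniformly at random from $\mathcal{N}$ without replacement. *)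

theory Defs
  imports Main "HOL-Library.FuncSet" Complex_Main
begin

(* Files are indexed by the elements of a finite set Ns (the paper's \<N>);
   users are indexed by {..<K}. A file is a bit string (bool list) of length F. *)

definition files_space :: "nat set \<Rightarrow> nat \<Rightarrow> (nat \<Rightarrow> bool list) set" where
  "files_space Ns F = PiE Ns (\<lambda>_. {xs. length xs = F})"

definition demands :: "nat set \<Rightarrow> nat \<Rightarrow> (nat \<Rightarrow> nat) set" where
  "demands Ns K = PiE {..<K} (\<lambda>_. Ns)"

definition nd :: "nat \<Rightarrow> (nat \<Rightarrow> nat) \<Rightarrow> nat" where
  "nd K d = card (d ` {..<K})"

(* error probability for demand d, files uniform i.i.d. over {0,1}^F:
   probability that some user k decodes incorrectly *)
definition error_prob ::
  "nat set \<Rightarrow> nat \<Rightarrow> nat \<Rightarrow> (nat \<Rightarrow> (nat \<Rightarrow> bool list) \<Rightarrow> bool list)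
   \<Rightarrow> ((nat \<Rightarrow> nat) \<Rightarrow> (nat \<Rightarrow> bool list) \<Rightarrow> bool list)
   \<Rightarrow> (nat \<Rightarrow> (nat \<Rightarrow> nat) \<Rightarrow> bool list \<Rightarrow> bool list \<Rightarrow> bool list)
   \<Rightarrow> (nat \<Rightarrow> nat) \<Rightarrow> real" where
  "error_prob Ns K F \<phi> \<psi> \<mu> d =
     real (card {W \<in> files_space Ns F. \<exists>k<K. \<mu> k d (\<psi> d W) (\<phi> k W) \<noteq> W (d k)})
     / real (card (files_space Ns F))"

(* A caching scheme for file size F bits, cache size M (normalised), demand set D
   (the demand vector is uniform over D):
   \<phi> k W  = cache content of user k (at most M*F bits),
   \<psi> d W  = broadcast message for demand d (at most L d bits),
   \<mu> k d X Z = decoded file of user k from message X and cache Z. *)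
definition good_scheme ::
  "real \<Rightarrow> nat set \<Rightarrow> nat \<Rightarrow> (nat \<Rightarrow> nat) set \<Rightarrow> nat
   \<Rightarrow> (nat \<Rightarrow> (nat \<Rightarrow> bool list) \<Rightarrow> bool list)
   \<Rightarrow> ((nat \<Rightarrow> nat) \<Rightarrow> (nat \<Rightarrow> bool list) \<Rightarrow> bool list)
   \<Rightarrow> ((nat \<Rightarrow> nat) \<Rightarrow> nat)
   \<Rightarrow> (nat \<Rightarrow> (nat \<Rightarrow> nat) \<Rightarrow> bool list \<Rightarrow> bool list \<Rightarrow> bool list)
   \<Rightarrow> real \<Rightarrow> real \<Rightarrow> bool" where
  "good_scheme M Ns K D F \<phi> \<psi> L \<mu> eps R \<longleftrightarrow>
     (\<forall>k<K. \<forall>W\<in>files_space Ns F. real (length (\<phi> k W)) \<le> M * real F) \<and>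
     (\<forall>d\<in>D. \<forall>W\<in>files_space Ns F. length (\<psi> d W) \<le> L d) \<and>
     (\<forall>d\<in>D. error_prob Ns K F \<phi> \<psi> \<mu> d \<le> eps) \<and>
     (\<Sum>d\<in>D. real (L d) / real F) / real (card D) \<le> R"

definition achievable :: "real \<Rightarrow> nat set \<Rightarrow> nat \<Rightarrow> (nat \<Rightarrow> nat) set \<Rightarrow> real \<Rightarrow> bool" where
  "achievable M Ns K D R \<longleftrightarrow>
     (\<forall>eps>0. \<exists>F0. \<forall>F\<ge>F0. \<exists>\<phi> \<psi> L \<mu>. good_scheme M Ns K D F \<phi> \<psi> L \<mu> eps (R + eps))"

definition opt_rate :: "real \<Rightarrow> nat set \<Rightarrow> nat \<Rightarrow> (nat \<Rightarrow> nat) set \<Rightarrow> real" where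
  "opt_rate M Ns K D = Inf {R. achievable M Ns K D R}"

definition Rbar :: "real \<Rightarrow> nat set \<Rightarrow> nat \<Rightarrow> real" where
  "Rbar M Ns K = opt_rate M Ns K (demands Ns K)"

definition Rbar_s :: "real \<Rightarrow> nat set \<Rightarrow> nat \<Rightarrow> nat \<Rightarrow> real" where
  "Rbar_s M Ns K s = opt_rate M Ns K {d \<in> demands Ns K. nd K d = s}"

end

theory Submission
  imports Defs
begin

text \<open>A scheme for \<open>K\<close> users also serves \<open>s\<close> users with distinct demands \<open>e\<close>: let \<open>s\<close> of the
  \<open>K\<close> users, chosen by an injection \<open>\<sigma>\<close>, act for them and complete \<open>e\<close> to a demand vector \<open>d\<close> of all
  \<open>K\<close> users with \<open>d \<circ> \<sigma> = e\<close>, taking the completion with the shortest message. To bound the resulting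
  rate, weight each \<open>d\<close> by the inverse of the number of injections on which it is distinct. Summed over
  all injections, every \<open>d\<close> with \<open>w(d) \<ge> s\<close> then carries total weight one, while for a fixed injection
  relabelling the files shows that all distinct \<open>e\<close> receive the same weight. Hence some injection gives
  an expected rate of at most the average rate over all demands divided by \<open>Pr(w(d) \<ge> s)\<close>.\<close>

definition injections :: "nat \<Rightarrow> nat \<Rightarrow> (nat \<Rightarrow> nat) set" where
  "injections s K = {\<sigma> \<in> {..<s} \<rightarrow>\<^sub>E {..<K}. inj_on \<sigma> {..<s}}"

definition subdemand :: "nat \<Rightarrow> (nat \<Rightarrow> nat) \<Rightarrow> (nat \<Rightarrow> nat) \<Rightarrow> nat \<Rightarrow> nat" where
  "subdemand s \<sigma> d = (\<lambda>j\<in>{..<s}. d (\<sigma> j))"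

definition distinct_demands :: "nat set \<Rightarrow> nat \<Rightarrow> (nat \<Rightarrow> nat) set" where
  "distinct_demands Ns s = {e \<in> demands Ns s. inj_on e {..<s}}"

definition distinct_selections :: "nat \<Rightarrow> nat \<Rightarrow> (nat \<Rightarrow> nat) \<Rightarrow> nat" where
  "distinct_selections s K d = card {\<sigma> \<in> injections s K. inj_on (subdemand s \<sigma> d) {..<s}}"

definition demand_fiber :: "nat set \<Rightarrow> nat \<Rightarrow> nat \<Rightarrow> (nat \<Rightarrow> nat) \<Rightarrow> (nat \<Rightarrow> nat) \<Rightarrow> (nat \<Rightarrow> nat) set" where
  "demand_fiber Ns s K \<sigma> e = {d \<in> demands Ns K. subdemand s \<sigma> d = e}"

definition fiber_weight :: "nat set \<Rightarrow> nat \<Rightarrow> nat \<Rightarrow> (nat \<Rightarrow> nat) \<Rightarrow> (nat \<Rightarrow> nat) \<Rightarrow> real" where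
  "fiber_weight Ns s K \<sigma> e = (\<Sum>d\<in>demand_fiber Ns s K \<sigma> e. 1 / real (distinct_selections s K d))"

definition relabel_demand :: "nat \<Rightarrow> (nat \<Rightarrow> nat) \<Rightarrow> (nat \<Rightarrow> nat) \<Rightarrow> nat \<Rightarrow> nat" where
  "relabel_demand K \<pi> d = (\<lambda>k\<in>{..<K}. \<pi> (d k))"

lemma finite_demands: "finite Ns \<Longrightarrow> finite (demands Ns K)"
  unfolding demands_def by (simp add: finite_PiE)

lemma finite_injections: "finite (injections s K)"
  unfolding injections_def by (rule finite_subset[of _ "{..<s} \<rightarrow>\<^sub>E {..<K}"]) (auto simp: finite_PiE)

lemma finite_files_space: "finite Ns \<Longrightarrow> finite (files_space Ns F)"
  unfolding files_space_def using finite_lists_length_eq[of "UNIV :: bool set" F]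
  by (simp add: finite_PiE)

lemma finite_demand_fiber: "finite Ns \<Longrightarrow> finite (demand_fiber Ns s K \<sigma> e)"
  unfolding demand_fiber_def using finite_demands by auto

lemma injections_lessD: "\<sigma> \<in> injections s K \<Longrightarrow> j < s \<Longrightarrow> \<sigma> j < K"
  unfolding injections_def by auto

lemma subdemand_in_demands:
  "\<sigma> \<in> injections s K \<Longrightarrow> d \<in> demands Ns K \<Longrightarrow> subdemand s \<sigma> d \<in> demands Ns s"
  unfolding injections_def demands_def subdemand_def by (auto simp: PiE_iff)

lemma distinct_demands_eq_nd: "{d \<in> demands Ns s. nd s d = s} = distinct_demands Ns s"
  unfolding distinct_demands_def nd_def using inj_on_iff_eq_card[of "{..<s}"] by auto

lemma ex_bij_extending:
  assumes fin: "finite Ns" and ie: "inj_on e A" and ie': "inj_on e' A"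
    and se: "e ` A \<subseteq> Ns" and se': "e' ` A \<subseteq> Ns"
  obtains \<pi> where "bij_betw \<pi> Ns Ns" "\<And>j. j \<in> A \<Longrightarrow> \<pi> (e j) = e' j"
proof -
  have "card (e ` A) = card (e' ` A)"
    using card_image[OF ie] card_image[OF ie'] by simp
  then have "card (Ns - e ` A) = card (Ns - e' ` A)"
    using se se' fin by (simp add: card_Diff_subset finite_subset)
  then obtain h where h: "bij_betw h (Ns - e ` A) (Ns - e' ` A)"
    using finite_same_card_bij fin by blast
  have "bij_betw (inv_into A e) (e ` A) A"
    using ie by (simp add: bij_betw_inv_into inj_on_imp_bij_betw)
  then have f: "bij_betw (\<lambda>x. e' (inv_into A e x)) (e ` A) (e' ` A)"
    using ie' bij_betw_trans[of "inv_into A e" "e ` A" A e' "e' ` A"]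
    by (simp add: inj_on_imp_bij_betw comp_def)
  define \<pi> where "\<pi> x = (if x \<in> e ` A then e' (inv_into A e x) else h x)" for x
  have "bij_betw \<pi> (e ` A \<union> (Ns - e ` A)) (e' ` A \<union> (Ns - e' ` A))"
    unfolding \<pi>_def by (rule bij_betw_disjoint_Un[OF f h]) auto
  then have "bij_betw \<pi> Ns Ns"
    using se se' by (simp add: Un_absorb1)
  moreover have "\<pi> (e j) = e' j" if "j \<in> A" for j
    using that ie by (simp add: \<pi>_def)
  ultimately show thesis by (rule that)
qed

lemma relabel_demand_in_demands:
  "\<pi> ` Ns \<subseteq> Ns \<Longrightarrow> d \<in> demands Ns K \<Longrightarrow> relabel_demand K \<pi> d \<in> demands Ns K"
  unfolding relabel_demand_def demands_def by (auto simp: PiE_iff)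

lemma inj_on_relabel_demand:
  assumes \<pi>: "inj_on \<pi> Ns"
  shows "inj_on (relabel_demand K \<pi>) (demands Ns K)"
proof (rule inj_onI)
  fix x y assume x: "x \<in> demands Ns K" and y: "y \<in> demands Ns K"
    and eq: "relabel_demand K \<pi> x = relabel_demand K \<pi> y"
  show "x = y"
  proof (rule ext)
    fix k
    show "x k = y k"
    proof (cases "k < K")
      case True
      then have "\<pi> (x k) = \<pi> (y k)"
        using fun_cong[OF eq, of k] by (simp add: relabel_demand_def)
      moreover have "x k \<in> Ns" "y k \<in> Ns"
        using x y True by (auto simp: demands_def)
      ultimately show ?thesis
        using \<pi> by (simp add: inj_on_eq_iff)
    next
      case False
      then have "x k = undefined" "y k = undefined"
        using x y by (simp_all add: demands_def PiE_arb[of x] PiE_arb[of y])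
      then show ?thesis by simp
    qed
  qed
qed

lemma subdemand_relabel_demand:
  "\<sigma> \<in> injections s K \<Longrightarrow> subdemand s \<sigma> (relabel_demand K \<pi> d) = (\<lambda>j\<in>{..<s}. \<pi> (subdemand s \<sigma> d j))"
  by (auto simp: subdemand_def relabel_demand_def injections_lessD)

lemma distinct_selections_relabel_demand:
  assumes \<pi>: "inj_on \<pi> Ns" and d: "d \<in> demands Ns K"
  shows "distinct_selections s K (relabel_demand K \<pi> d) = distinct_selections s K d"
proof -
  have "inj_on (subdemand s \<sigma> (relabel_demand K \<pi> d)) {..<s} \<longleftrightarrow> inj_on (subdemand s \<sigma> d) {..<s}"
    if \<sigma>: "\<sigma> \<in> injections s K" for \<sigma>
  proof -
    have "subdemand s \<sigma> d ` {..<s} \<subseteq> Ns"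
      using subdemand_in_demands[OF \<sigma> d] by (auto simp: demands_def)
    then show ?thesis
      using \<pi> unfolding subdemand_relabel_demand[OF \<sigma>] inj_on_def by (auto simp: image_subset_iff)
  qed
  then show ?thesis
    unfolding distinct_selections_def by (intro arg_cong[where f = card] Collect_cong) blast
qed

text \<open>Relabelling the files by a permutation \<open>\<pi>\<close> of \<open>Ns\<close> with \<open>\<pi> \<circ> e = e'\<close> maps the fiber of \<open>e\<close>
  injectively into that of \<open>e'\<close> and preserves the weights.\<close>
lemma fiber_weight_le:
  assumes fin: "finite Ns" and \<sigma>: "\<sigma> \<in> injections s K"
    and e: "e \<in> distinct_demands Ns s" and e': "e' \<in> distinct_demands Ns s"
  shows "fiber_weight Ns s K \<sigma> e \<le> fiber_weight Ns s K \<sigma> e'"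
proof -
  have "inj_on e {..<s}" "e ` {..<s} \<subseteq> Ns" "inj_on e' {..<s}" "e' ` {..<s} \<subseteq> Ns"
    using e e' unfolding distinct_demands_def demands_def by (auto dest: PiE_mem)
  then obtain \<pi> where \<pi>: "bij_betw \<pi> Ns Ns" "\<And>j. j \<in> {..<s} \<Longrightarrow> \<pi> (e j) = e' j"
    using ex_bij_extending[OF fin] by metis
  have inj\<pi>: "inj_on \<pi> Ns" and \<pi>Ns: "\<pi> ` Ns = Ns"
    using \<pi>(1) by (auto simp: bij_betw_def)
  let ?T = "relabel_demand K \<pi>"
  let ?F = "demand_fiber Ns s K \<sigma> e" and ?F' = "demand_fiber Ns s K \<sigma> e'"
  have "?T d \<in> ?F'" if "d \<in> ?F" for d
  proof -
    have "subdemand s \<sigma> (?T d) = (\<lambda>j\<in>{..<s}. e' j)"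
      using that \<pi>(2) by (auto simp: subdemand_relabel_demand[OF \<sigma>] demand_fiber_def intro!: restrict_ext)
    also have "\<dots> = e'"
      using e' by (intro PiE_restrict[where B = "\<lambda>_. Ns"]) (simp add: distinct_demands_def demands_def)
    finally show ?thesis
      using that relabel_demand_in_demands[of \<pi> Ns] \<pi>Ns by (simp add: demand_fiber_def)
  qed
  then have T_fiber: "?T ` ?F \<subseteq> ?F'" by blast
  have inj_T: "inj_on ?T ?F"
    by (rule inj_on_subset[OF inj_on_relabel_demand[OF inj\<pi>]]) (simp add: demand_fiber_def)
  have "fiber_weight Ns s K \<sigma> e = (\<Sum>d\<in>?F. 1 / real (distinct_selections s K (?T d)))"
    unfolding fiber_weight_def
    by (intro sum.cong refl) (simp add: demand_fiber_def distinct_selections_relabel_demand[OF inj\<pi>])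
  also have "\<dots> = (\<Sum>d\<in>?T ` ?F. 1 / real (distinct_selections s K d))"
    by (simp add: sum.reindex[OF inj_T])
  also have "\<dots> \<le> fiber_weight Ns s K \<sigma> e'"
    unfolding fiber_weight_def by (rule sum_mono2[OF finite_demand_fiber[OF fin] T_fiber]) auto
  finally show ?thesis .
qed

lemma fiber_weight_eq:
  "finite Ns \<Longrightarrow> \<sigma> \<in> injections s K \<Longrightarrow> e \<in> distinct_demands Ns s \<Longrightarrow> e' \<in> distinct_demands Ns s
    \<Longrightarrow> fiber_weight Ns s K \<sigma> e = fiber_weight Ns s K \<sigma> e'"
  using fiber_weight_le by (meson order_antisym)

lemma demand_fiber_nonempty:
  assumes \<sigma>: "\<sigma> \<in> injections s K" and e: "e \<in> demands Ns s" and d1: "d1 \<in> demands Ns K"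
  shows "demand_fiber Ns s K \<sigma> e \<noteq> {}"
proof -
  have inj\<sigma>: "inj_on \<sigma> {..<s}" using \<sigma> by (simp add: injections_def)
  define d where "d = (\<lambda>k\<in>{..<K}. if k \<in> \<sigma> ` {..<s} then e (inv_into {..<s} \<sigma> k) else d1 k)"
  have e_mem: "e j \<in> Ns" if "j < s" for j
    using e that by (auto simp: demands_def dest: PiE_mem)
  have "d1 k \<in> Ns" if "k < K" for k
    using d1 that by (auto simp: demands_def dest: PiE_mem)
  then have "d \<in> demands Ns K"
    using e_mem inv_into_into[of _ \<sigma> "{..<s}"]
    unfolding d_def demands_def by (auto simp: restrict_PiE_iff)
  moreover have "subdemand s \<sigma> d = e"
  proof (rule ext)
    fix j
    show "subdemand s \<sigma> d j = e j"
    proof (cases "j < s")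
      case True
      then show ?thesis
        using injections_lessD[OF \<sigma> True] inj\<sigma> by (simp add: subdemand_def d_def)
    next
      case False
      have "e \<in> {..<s} \<rightarrow>\<^sub>E Ns" using e by (simp add: demands_def)
      then show ?thesis
        using False by (simp add: subdemand_def PiE_arb[of e])
    qed
  qed
  ultimately show ?thesis by (auto simp: demand_fiber_def)
qed

lemma ex_injection_distinct:
  assumes d: "d \<in> demands Ns K" and "s \<le> nd K d"
  obtains \<sigma> where "\<sigma> \<in> injections s K" "inj_on (subdemand s \<sigma> d) {..<s}"
proof -
  obtain T where T: "T \<subseteq> d ` {..<K}" "card T = s" "finite T"
    using assms(2) obtain_subset_with_card_n unfolding nd_def by metis
  obtain f where f: "bij_betw f {..<s} T"
    using ex_bij_betw_nat_finite[OF T(3)] T(2) by (auto simp: atLeast0LessThan)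
  define \<sigma> where "\<sigma> = (\<lambda>j\<in>{..<s}. inv_into {..<K} d (f j))"
  have fT: "f j \<in> d ` {..<K}" if "j < s" for j
    using f T(1) that by (auto simp: bij_betw_def)
  have d\<sigma>: "d (\<sigma> j) = f j" if "j < s" for j
    using fT[OF that] that by (simp add: \<sigma>_def f_inv_into_f)
  have inj_f: "inj_on f {..<s}" using f by (simp add: bij_betw_def)
  have "\<sigma> \<in> {..<s} \<rightarrow>\<^sub>E {..<K}"
    using fT inv_into_into[of _ d "{..<K}"] by (auto simp: \<sigma>_def)
  moreover have "inj_on \<sigma> {..<s}"
    by (rule inj_onI) (metis d\<sigma> inj_f inj_onD lessThan_iff)
  moreover have "inj_on (subdemand s \<sigma> d) {..<s}"
    using inj_f d\<sigma> unfolding subdemand_def inj_on_def by simp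
  ultimately show thesis
    using that by (simp add: injections_def)
qed

lemma sum_distinct_demand_fibers:
  assumes fin: "finite Ns" and \<sigma>: "\<sigma> \<in> injections s K"
  shows "(\<Sum>e\<in>distinct_demands Ns s. \<Sum>d\<in>demand_fiber Ns s K \<sigma> e. f d)
       = (\<Sum>d\<in>{d \<in> demands Ns K. inj_on (subdemand s \<sigma> d) {..<s}}. f d)"
proof -
  let ?A = "{d \<in> demands Ns K. inj_on (subdemand s \<sigma> d) {..<s}}"
  have "subdemand s \<sigma> ` ?A \<subseteq> distinct_demands Ns s"
    using subdemand_in_demands[OF \<sigma>] by (auto simp: distinct_demands_def)
  moreover have "finite ?A" "finite (distinct_demands Ns s)"
    using finite_demands[OF fin] by (auto simp: distinct_demands_def)
  ultimately have "(\<Sum>e\<in>distinct_demands Ns s. \<Sum>d\<in>{d \<in> ?A. subdemand s \<sigma> d = e}. f d)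
      = (\<Sum>d\<in>?A. f d)"
    by (intro sum.group)
  moreover have "{d \<in> ?A. subdemand s \<sigma> d = e} = demand_fiber Ns s K \<sigma> e"
    if "e \<in> distinct_demands Ns s" for e
    using that by (auto simp: demand_fiber_def distinct_demands_def)
  ultimately show ?thesis by simp
qed

text \<open>Double counting: a demand vector is counted once for each injection on which it is distinct,
  which the weight \<open>1 / distinct_selections\<close> cancels.\<close>
lemma sum_injections_weighted:
  assumes fin: "finite Ns"
  shows "(\<Sum>\<sigma>\<in>injections s K. \<Sum>d\<in>{d \<in> demands Ns K. inj_on (subdemand s \<sigma> d) {..<s}}.
            h d / real (distinct_selections s K d))
       = (\<Sum>d\<in>{d \<in> demands Ns K. 0 < distinct_selections s K d}. h d)"
proof -
  let ?D = "demands Ns K" and ?I = "injections s K"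
  let ?P = "\<lambda>\<sigma> d. inj_on (subdemand s \<sigma> d) {..<s}"
  have "(\<Sum>\<sigma>\<in>?I. \<Sum>d\<in>{d \<in> ?D. ?P \<sigma> d}. h d / real (distinct_selections s K d))
      = (\<Sum>\<sigma>\<in>?I. \<Sum>d\<in>?D. if ?P \<sigma> d then h d / real (distinct_selections s K d) else 0)"
    using finite_demands[OF fin] by (simp add: sum.inter_filter)
  also have "\<dots> = (\<Sum>d\<in>?D. \<Sum>\<sigma>\<in>?I. if ?P \<sigma> d then h d / real (distinct_selections s K d) else 0)"
    by (rule sum.swap)
  also have "\<dots> = (\<Sum>d\<in>?D. h d / real (distinct_selections s K d) * real (distinct_selections s K d))"
    using finite_injections by (simp add: sum.inter_filter[symmetric] distinct_selections_def)
  also have "\<dots> = (\<Sum>d\<in>?D. if 0 < distinct_selections s K d then h d else 0)"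
    by (intro sum.cong refl) simp
  also have "\<dots> = (\<Sum>d\<in>{d \<in> ?D. 0 < distinct_selections s K d}. h d)"
    using finite_demands[OF fin] by (simp add: sum.inter_filter)
  finally show ?thesis .
qed

lemma ex_le_weighted_sum:
  fixes a Z :: "'i \<Rightarrow> real"
  assumes "finite I" "I \<noteq> {}" "\<And>i. i \<in> I \<Longrightarrow> 0 \<le> Z i"
  obtains i where "i \<in> I" "a i * sum Z I \<le> (\<Sum>j\<in>I. Z j * a j)"
proof
  let ?i = "arg_min_on a I"
  show "?i \<in> I" by (rule arg_min_if_finite(1)[OF assms(1,2)])
  have "a ?i * Z j \<le> Z j * a j" if "j \<in> I" for j
    using arg_min_least[OF assms(1,2) that, of a] assms(3)[OF that]
    by (simp add: mult.commute mult_left_mono)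
  then show "a ?i * sum Z I \<le> (\<Sum>j\<in>I. Z j * a j)"
    by (simp add: sum_distrib_left sum_mono)
qed

definition cheapest_completion ::
  "((nat \<Rightarrow> nat) \<Rightarrow> real) \<Rightarrow> nat set \<Rightarrow> nat \<Rightarrow> nat \<Rightarrow> (nat \<Rightarrow> nat) \<Rightarrow> (nat \<Rightarrow> nat) \<Rightarrow> nat \<Rightarrow> nat" where
  "cheapest_completion Lr Ns s K \<sigma> e = arg_min_on Lr (demand_fiber Ns s K \<sigma> e)"

lemma
  assumes "finite Ns" "\<sigma> \<in> injections s K" "e \<in> demands Ns s" "d1 \<in> demands Ns K"
  shows cheapest_completion_in_fiber: "cheapest_completion Lr Ns s K \<sigma> e \<in> demand_fiber Ns s K \<sigma> e"
    and cheapest_completion_le: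
      "d \<in> demand_fiber Ns s K \<sigma> e \<Longrightarrow> Lr (cheapest_completion Lr Ns s K \<sigma> e) \<le> Lr d"
  unfolding cheapest_completion_def
  using finite_demand_fiber[OF assms(1)] demand_fiber_nonempty[OF assms(2-4)]
  by (rule arg_min_if_finite(1), rule arg_min_least)

lemma distinct_selections_pos:
  assumes "d \<in> demands Ns K" "s \<le> nd K d"
  shows "0 < distinct_selections s K d"
proof -
  obtain \<sigma> where "\<sigma> \<in> injections s K" "inj_on (subdemand s \<sigma> d) {..<s}"
    using ex_injection_distinct[OF assms] .
  then show ?thesis
    using finite_injections by (auto simp: distinct_selections_def card_gt_0_iff)
qed

lemma card_distinct_demands_mult_fiber_weight:
  assumes fin: "finite Ns" and \<sigma>: "\<sigma> \<in> injections s K" and e0: "e0 \<in> distinct_demands Ns s"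
  shows "real (card (distinct_demands Ns s)) * fiber_weight Ns s K \<sigma> e0
       = (\<Sum>d\<in>{d \<in> demands Ns K. inj_on (subdemand s \<sigma> d) {..<s}}. 1 / real (distinct_selections s K d))"
proof -
  have "real (card (distinct_demands Ns s)) * fiber_weight Ns s K \<sigma> e0
      = (\<Sum>e\<in>distinct_demands Ns s. fiber_weight Ns s K \<sigma> e)"
    using fiber_weight_eq[OF fin \<sigma> _ e0] by simp
  also have "\<dots> = (\<Sum>d\<in>{d \<in> demands Ns K. inj_on (subdemand s \<sigma> d) {..<s}}. 1 / real (distinct_selections s K d))"
    unfolding fiber_weight_def by (rule sum_distinct_demand_fibers[OF fin \<sigma>])
  finally show ?thesis .
qed

lemma fiber_weight_mult_sum_cheapest_le:
  assumes fin: "finite Ns" and \<sigma>: "\<sigma> \<in> injections s K" and e0: "e0 \<in> distinct_demands Ns s"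
    and d1: "d1 \<in> demands Ns K"
  shows "fiber_weight Ns s K \<sigma> e0 * (\<Sum>e\<in>distinct_demands Ns s. Lr (cheapest_completion Lr Ns s K \<sigma> e))
       \<le> (\<Sum>d\<in>{d \<in> demands Ns K. inj_on (subdemand s \<sigma> d) {..<s}}. Lr d / real (distinct_selections s K d))"
proof -
  let ?c = "cheapest_completion Lr Ns s K \<sigma>"
  have "fiber_weight Ns s K \<sigma> e0 * (\<Sum>e\<in>distinct_demands Ns s. Lr (?c e))
      = (\<Sum>e\<in>distinct_demands Ns s. fiber_weight Ns s K \<sigma> e * Lr (?c e))"
    unfolding sum_distrib_left using fiber_weight_eq[OF fin \<sigma> _ e0] by simp
  also have "\<dots> \<le> (\<Sum>e\<in>distinct_demands Ns s. \<Sum>d\<in>demand_fiber Ns s K \<sigma> e.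
                     Lr d / real (distinct_selections s K d))"
    unfolding fiber_weight_def sum_distrib_right
  proof (intro sum_mono)
    fix e d assume "e \<in> distinct_demands Ns s" "d \<in> demand_fiber Ns s K \<sigma> e"
    then have "Lr (?c e) \<le> Lr d"
      using cheapest_completion_le[OF fin \<sigma> _ d1] by (simp add: distinct_demands_def)
    then show "1 / real (distinct_selections s K d) * Lr (?c e) \<le> Lr d / real (distinct_selections s K d)"
      by (simp add: divide_right_mono)
  qed
  also have "\<dots> = (\<Sum>d\<in>{d \<in> demands Ns K. inj_on (subdemand s \<sigma> d) {..<s}}.
                    Lr d / real (distinct_selections s K d))"
    by (rule sum_distinct_demand_fibers[OF fin \<sigma>])
  finally show ?thesis .
qed

lemma sum_fiber_weight_mult_sum_cheapest_le:
  assumes fin: "finite Ns" and e0: "e0 \<in> distinct_demands Ns s" and d1: "d1 \<in> demands Ns K"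
    and Lr_nonneg: "\<And>d. d \<in> demands Ns K \<Longrightarrow> 0 \<le> Lr d"
  shows "(\<Sum>\<sigma>\<in>injections s K. fiber_weight Ns s K \<sigma> e0
            * (\<Sum>e\<in>distinct_demands Ns s. Lr (cheapest_completion Lr Ns s K \<sigma> e)))
       \<le> (\<Sum>d\<in>demands Ns K. Lr d)"
proof -
  have "(\<Sum>\<sigma>\<in>injections s K. fiber_weight Ns s K \<sigma> e0
            * (\<Sum>e\<in>distinct_demands Ns s. Lr (cheapest_completion Lr Ns s K \<sigma> e)))
      \<le> (\<Sum>\<sigma>\<in>injections s K. \<Sum>d\<in>{d \<in> demands Ns K. inj_on (subdemand s \<sigma> d) {..<s}}.
            Lr d / real (distinct_selections s K d))"
    by (intro sum_mono fiber_weight_mult_sum_cheapest_le[OF fin _ e0 d1])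
  also have "\<dots> = (\<Sum>d\<in>{d \<in> demands Ns K. 0 < distinct_selections s K d}. Lr d)"
    by (rule sum_injections_weighted[OF fin])
  also have "\<dots> \<le> (\<Sum>d\<in>demands Ns K. Lr d)"
    using finite_demands[OF fin] Lr_nonneg by (intro sum_mono2) auto
  finally show ?thesis .
qed

lemma card_nd_ge_le_sum_fiber_weight:
  assumes fin: "finite Ns" and e0: "e0 \<in> distinct_demands Ns s"
  shows "real (card {d \<in> demands Ns K. s \<le> nd K d})
       \<le> real (card (distinct_demands Ns s)) * (\<Sum>\<sigma>\<in>injections s K. fiber_weight Ns s K \<sigma> e0)"
proof -
  have "real (card {d \<in> demands Ns K. s \<le> nd K d})
      \<le> real (card {d \<in> demands Ns K. 0 < distinct_selections s K d})"
    using finite_demands[OF fin] distinct_selections_pos by (auto intro: card_mono)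
  also have "\<dots> = (\<Sum>\<sigma>\<in>injections s K. \<Sum>d\<in>{d \<in> demands Ns K. inj_on (subdemand s \<sigma> d) {..<s}}.
                     1 / real (distinct_selections s K d))"
    using sum_injections_weighted[OF fin, where h = "\<lambda>_. 1"] by simp
  also have "\<dots> = real (card (distinct_demands Ns s)) * (\<Sum>\<sigma>\<in>injections s K. fiber_weight Ns s K \<sigma> e0)"
    by (simp add: sum_distrib_left card_distinct_demands_mult_fiber_weight[OF fin _ e0])
  finally show ?thesis .
qed

lemma ex_injection_cheap_completions:
  fixes Lr :: "(nat \<Rightarrow> nat) \<Rightarrow> real"
  assumes fin: "finite Ns" and d0: "d0 \<in> demands Ns K" "s \<le> nd K d0"
    and Lr_nonneg: "\<And>d. d \<in> demands Ns K \<Longrightarrow> 0 \<le> Lr d"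
  obtains \<sigma> where "\<sigma> \<in> injections s K"
    and "(\<Sum>e\<in>distinct_demands Ns s. Lr (cheapest_completion Lr Ns s K \<sigma> e))
           / real (card (distinct_demands Ns s))
         \<le> (\<Sum>d\<in>demands Ns K. Lr d) / real (card {d \<in> demands Ns K. s \<le> nd K d})"
proof -
  let ?I = "injections s K" and ?E = "distinct_demands Ns s" and ?G = "{d \<in> demands Ns K. s \<le> nd K d}"
  obtain \<sigma>0 where \<sigma>0: "\<sigma>0 \<in> ?I" "inj_on (subdemand s \<sigma>0 d0) {..<s}"
    using ex_injection_distinct[OF d0] .
  define e0 where "e0 = subdemand s \<sigma>0 d0"
  have e0: "e0 \<in> ?E"
    using \<sigma>0 d0 subdemand_in_demands by (auto simp: e0_def distinct_demands_def)
  define w where "w \<sigma> = fiber_weight Ns s K \<sigma> e0" for \<sigma>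
  define a where "a \<sigma> = (\<Sum>e\<in>?E. Lr (cheapest_completion Lr Ns s K \<sigma> e))" for \<sigma>
  have "?I \<noteq> {}" using \<sigma>0 by blast
  moreover have "0 \<le> w \<sigma>" for \<sigma>
    unfolding w_def fiber_weight_def by (simp add: sum_nonneg)
  ultimately obtain \<sigma> where \<sigma>: "\<sigma> \<in> ?I" and \<sigma>_min: "a \<sigma> * sum w ?I \<le> (\<Sum>\<sigma>'\<in>?I. w \<sigma>' * a \<sigma>')"
    using ex_le_weighted_sum[OF finite_injections, where Z = w and a = a] by blast
  have a_nonneg: "0 \<le> a \<sigma>"
    unfolding a_def using cheapest_completion_in_fiber[OF fin \<sigma> _ d0(1)] Lr_nonneg
    by (intro sum_nonneg) (auto simp: demand_fiber_def distinct_demands_def)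
  have "a \<sigma> * real (card ?G) \<le> a \<sigma> * (real (card ?E) * sum w ?I)"
    using card_nd_ge_le_sum_fiber_weight[OF fin e0] a_nonneg
    by (intro mult_left_mono) (simp_all add: w_def)
  also have "\<dots> = real (card ?E) * (a \<sigma> * sum w ?I)"
    by (simp add: mult.left_commute)
  also have "\<dots> \<le> real (card ?E) * (\<Sum>d\<in>demands Ns K. Lr d)"
    using \<sigma>_min sum_fiber_weight_mult_sum_cheapest_le[where Lr = Lr, OF fin e0 d0(1) Lr_nonneg]
    by (intro mult_left_mono) (simp_all add: w_def a_def)
  finally have "a \<sigma> * real (card ?G) \<le> real (card ?E) * (\<Sum>d\<in>demands Ns K. Lr d)" .
  moreover have "0 < card ?E"
    using e0 finite_demands[OF fin] by (auto simp: card_gt_0_iff distinct_demands_def)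
  moreover have "0 < card ?G"
    using d0 finite_demands[OF fin] by (auto simp: card_gt_0_iff)
  ultimately show thesis
    using that[OF \<sigma>] unfolding a_def by (simp add: divide_simps mult.commute)
qed

lemma good_scheme_restrict:
  assumes g: "good_scheme M Ns K D F \<phi> \<psi> L \<mu> eps R"
    and fin: "finite Ns" and \<sigma>: "\<And>j. j < s \<Longrightarrow> \<sigma> j < K"
    and c_D: "\<And>e. e \<in> E \<Longrightarrow> c e \<in> D"
    and c_\<sigma>: "\<And>e j. e \<in> E \<Longrightarrow> j < s \<Longrightarrow> c e (\<sigma> j) = e j"
    and rate: "(\<Sum>e\<in>E. real (L (c e)) / real F) / real (card E) \<le> R'"
    and "eps \<le> eps'"
  shows "good_scheme M Ns s E F (\<lambda>j. \<phi> (\<sigma> j)) (\<lambda>e. \<psi> (c e)) (\<lambda>e. L (c e))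
           (\<lambda>j e. \<mu> (\<sigma> j) (c e)) eps' R'"
  unfolding good_scheme_def
proof (intro conjI ballI allI impI)
  fix j W assume "j < s" "W \<in> files_space Ns F"
  then show "real (length (\<phi> (\<sigma> j) W)) \<le> M * real F"
    using g \<sigma> unfolding good_scheme_def by blast
next
  fix e W assume "e \<in> E" "W \<in> files_space Ns F"
  then show "length (\<psi> (c e) W) \<le> L (c e)"
    using g c_D unfolding good_scheme_def by blast
next
  fix e assume e: "e \<in> E"
  have "{W \<in> files_space Ns F. \<exists>j<s. \<mu> (\<sigma> j) (c e) (\<psi> (c e) W) (\<phi> (\<sigma> j) W) \<noteq> W (e j)}
      \<subseteq> {W \<in> files_space Ns F. \<exists>k<K. \<mu> k (c e) (\<psi> (c e) W) (\<phi> k W) \<noteq> W (c e k)}"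
    using \<sigma> c_\<sigma>[OF e] by fastforce
  then have "error_prob Ns s F (\<lambda>j. \<phi> (\<sigma> j)) (\<lambda>e. \<psi> (c e)) (\<lambda>j e. \<mu> (\<sigma> j) (c e)) e
      \<le> error_prob Ns K F \<phi> \<psi> \<mu> (c e)"
    unfolding error_prob_def using finite_files_space[OF fin]
    by (intro divide_right_mono) (auto intro: card_mono)
  also have "\<dots> \<le> eps"
    using g c_D[OF e] unfolding good_scheme_def by blast
  finally show "error_prob Ns s F (\<lambda>j. \<phi> (\<sigma> j)) (\<lambda>e. \<psi> (c e)) (\<lambda>j e. \<mu> (\<sigma> j) (c e)) e \<le> eps'"
    using \<open>eps \<le> eps'\<close> by linarith
qed (use rate in simp)

lemma achievable_nonneg: "achievable M Ns K D R \<Longrightarrow> 0 \<le> R"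
proof (rule ccontr)
  assume ach: "achievable M Ns K D R" and "\<not> 0 \<le> R"
  then obtain F \<phi> \<psi> L \<mu> where "good_scheme M Ns K D F \<phi> \<psi> L \<mu> (- R / 2) (R + - R / 2)"
    unfolding achievable_def by (metis order_refl neg_0_less_iff_less half_gt_zero not_le)
  then have "(\<Sum>d\<in>D. real (L d) / real F) / real (card D) \<le> R / 2"
    unfolding good_scheme_def by simp
  moreover have "0 \<le> (\<Sum>d\<in>D. real (L d) / real F) / real (card D)"
    by (simp add: sum_nonneg)
  ultimately show False using \<open>\<not> 0 \<le> R\<close> by linarith
qed

lemma length_concat_same_length:
  "(\<And>x. x \<in> set xs \<Longrightarrow> length x = F) \<Longrightarrow> length (concat xs) = length xs * F"
  by (induction xs) auto

lemma take_drop_concat_same_length: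
  "(\<And>x. x \<in> set xs \<Longrightarrow> length x = F) \<Longrightarrow> k < length xs \<Longrightarrow> take F (drop (k * F) (concat xs)) = xs ! k"
proof (induction xs arbitrary: k)
  case (Cons x xs)
  then show ?case by (cases k) (simp_all add: add.commute)
qed simp

lemma achievable_uncoded:
  assumes M: "0 \<le> M" and D: "D \<subseteq> demands Ns K"
  shows "achievable M Ns K D (real K)"
  unfolding achievable_def
proof (intro allI impI exI)
  fix eps :: real and F :: nat assume eps: "0 < eps"
  define \<psi> where "\<psi> d W = concat (map (\<lambda>k. W (d k)) [0..<K])" for d :: "nat \<Rightarrow> nat" and W :: "nat \<Rightarrow> bool list"
  define \<mu> where "\<mu> = (\<lambda>k (d :: nat \<Rightarrow> nat) (X :: bool list) (Z :: bool list). take F (drop (k * F) X))"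
  have len: "length x = F" if "d \<in> D" "W \<in> files_space Ns F" "x \<in> set (map (\<lambda>k. W (d k)) [0..<K])"
    for d W x
    using that D by (auto simp: demands_def files_space_def dest!: PiE_mem)
  have decode: "\<mu> k d (\<psi> d W) [] = W (d k)" if "d \<in> D" "W \<in> files_space Ns F" "k < K" for d W k
  proof -
    have "\<mu> k d (\<psi> d W) [] = map (\<lambda>k. W (d k)) [0..<K] ! k"
      unfolding \<mu>_def \<psi>_def
      by (rule take_drop_concat_same_length) (use len[OF that(1,2)] that(3) in auto)
    then show ?thesis using that(3) by simp
  qed
  have "length (\<psi> d W) = K * F" if "d \<in> D" "W \<in> files_space Ns F" for d W
    unfolding \<psi>_def
    using length_concat_same_length[of "map (\<lambda>k. W (d k)) [0..<K]" F] len[OF that] by simp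
  moreover have "error_prob Ns K F (\<lambda>_ _. []) \<psi> \<mu> d = 0" if "d \<in> D" for d
  proof -
    have no_error: "{W \<in> files_space Ns F. \<exists>k<K. \<mu> k d (\<psi> d W) [] \<noteq> W (d k)} = {}"
      using decode[OF that] by auto
    show ?thesis unfolding error_prob_def no_error by simp
  qed
  moreover have "(\<Sum>d\<in>D. real (K * F) / real F) / real (card D) \<le> real K"
  proof -
    have "(\<Sum>d\<in>D. real (K * F) / real F) \<le> real (card D) * real K"
      using sum_mono[of D "\<lambda>_. real (K * F) / real F" "\<lambda>_. real K"] by (cases "F = 0") auto
    then show ?thesis by (simp add: divide_le_eq mult.commute)
  qed
  ultimately show "good_scheme M Ns K D F (\<lambda>_ _. []) \<psi> (\<lambda>_. K * F) \<mu> eps (real K + eps)"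
    using M eps by (simp add: good_scheme_def)
qed

lemma nd_ge_fraction_pos:
  assumes "finite Ns" "d0 \<in> demands Ns K" "s \<le> nd K d0"
  shows "0 < real (card {d \<in> demands Ns K. s \<le> nd K d}) / real (card (demands Ns K))"
proof -
  have "0 < card {d \<in> demands Ns K. s \<le> nd K d}"
    using assms finite_demands[of Ns K] by (auto simp: card_gt_0_iff)
  moreover have "card {d \<in> demands Ns K. s \<le> nd K d} \<le> card (demands Ns K)"
    using finite_demands[OF assms(1)] by (intro card_mono) auto
  ultimately show ?thesis by simp
qed

lemma ex_good_scheme_distinct_demands:
  assumes g: "good_scheme M Ns K (demands Ns K) F \<phi> \<psi> L \<mu> eps R"
    and fin: "finite Ns" and d0: "d0 \<in> demands Ns K" "s \<le> nd K d0" and "eps \<le> eps'"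
  defines "P \<equiv> real (card {d \<in> demands Ns K. s \<le> nd K d}) / real (card (demands Ns K))"
  shows "\<exists>\<phi>' \<psi>' L' \<mu>'. good_scheme M Ns s (distinct_demands Ns s) F \<phi>' \<psi>' L' \<mu>' eps' (R / P)"
proof -
  let ?D = "demands Ns K" and ?E = "distinct_demands Ns s" and ?G = "{d \<in> demands Ns K. s \<le> nd K d}"
  define Lr where "Lr d = real (L d) / real F" for d
  obtain \<sigma> where \<sigma>: "\<sigma> \<in> injections s K"
    and cheap: "(\<Sum>e\<in>?E. Lr (cheapest_completion Lr Ns s K \<sigma> e)) / real (card ?E)
        \<le> (\<Sum>d\<in>?D. Lr d) / real (card ?G)"
    using ex_injection_cheap_completions[OF fin d0, of Lr] by (auto simp: Lr_def)
  define c where "c = cheapest_completion Lr Ns s K \<sigma>"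
  have c: "c e \<in> demand_fiber Ns s K \<sigma> e" if "e \<in> ?E" for e
    using cheapest_completion_in_fiber[OF fin \<sigma> _ d0(1)] that
    by (simp add: c_def distinct_demands_def)
  have "0 < card ?D"
    using d0 finite_demands[OF fin] by (auto simp: card_gt_0_iff)
  then have "(\<Sum>d\<in>?D. Lr d) / real (card ?G) = ((\<Sum>d\<in>?D. Lr d) / real (card ?D)) / P"
    by (simp add: P_def)
  also have "\<dots> \<le> R / P"
    using g nd_ge_fraction_pos[OF fin d0] unfolding good_scheme_def Lr_def P_def
    by (intro divide_right_mono) auto
  finally have rate: "(\<Sum>e\<in>?E. real (L (c e)) / real F) / real (card ?E) \<le> R / P"
    using cheap by (simp add: c_def Lr_def)
  have "c e (\<sigma> j) = e j" if "e \<in> ?E" "j < s" for e j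
    using c[OF that(1)] that(2) by (auto simp: demand_fiber_def subdemand_def dest: fun_cong[of _ _ j])
  then have "good_scheme M Ns s ?E F (\<lambda>j. \<phi> (\<sigma> j)) (\<lambda>e. \<psi> (c e)) (\<lambda>e. L (c e))
      (\<lambda>j e. \<mu> (\<sigma> j) (c e)) eps' (R / P)"
    using c by (intro good_scheme_restrict[OF g fin injections_lessD[OF \<sigma>] _ _ rate \<open>eps \<le> eps'\<close>])
      (auto simp: demand_fiber_def)
  then show ?thesis by blast
qed

lemma achievable_distinct_demands:
  assumes fin: "finite Ns" and d0: "d0 \<in> demands Ns K" "s \<le> nd K d0"
    and ach: "achievable M Ns K (demands Ns K) R"
  defines "P \<equiv> real (card {d \<in> demands Ns K. s \<le> nd K d}) / real (card (demands Ns K))"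
  shows "achievable M Ns s (distinct_demands Ns s) (R / P)"
  unfolding achievable_def
proof (intro allI impI)
  have P_pos: "0 < P"
    unfolding P_def by (rule nd_ge_fraction_pos[OF fin d0])
  have "card {d \<in> demands Ns K. s \<le> nd K d} \<le> card (demands Ns K)"
    using finite_demands[OF fin] by (intro card_mono) auto
  then have P_le_1: "P \<le> 1"
    by (auto simp: P_def divide_le_eq_1)
  fix eps' :: real assume "0 < eps'"
  define eps where "eps = eps' * P"
  have "0 < eps" and eps_le: "eps \<le> eps'"
    using \<open>0 < eps'\<close> P_pos P_le_1 by (auto simp: eps_def mult_left_le)
  then obtain F0 where F0: "\<And>F. F0 \<le> F \<Longrightarrow>
      \<exists>\<phi> \<psi> L \<mu>. good_scheme M Ns K (demands Ns K) F \<phi> \<psi> L \<mu> eps (R + eps)"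
    using ach unfolding achievable_def by blast
  have rate: "(R + eps) / P = R / P + eps'"
    using P_pos by (simp add: eps_def add_divide_distrib)
  show "\<exists>F0. \<forall>F\<ge>F0. \<exists>\<phi> \<psi> L \<mu>.
      good_scheme M Ns s (distinct_demands Ns s) F \<phi> \<psi> L \<mu> eps' (R / P + eps')"
  proof (rule exI[of _ F0], intro allI impI)
    fix F assume "F0 \<le> F"
    then obtain \<phi> \<psi> L \<mu> where "good_scheme M Ns K (demands Ns K) F \<phi> \<psi> L \<mu> eps (R + eps)"
      using F0 by blast
    from ex_good_scheme_distinct_demands[OF this fin d0 eps_le]
    show "\<exists>\<phi> \<psi> L \<mu>. good_scheme M Ns s (distinct_demands Ns s) F \<phi> \<psi> L \<mu> eps' (R / P + eps')"
      unfolding P_def by (simp only: rate[unfolded P_def])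
  qed
qed

lemma ex_demand_nd_ge:
  assumes fin: "finite Ns" and "s \<le> card Ns" and "s \<le> K" and "Ns \<noteq> {}"
  obtains d where "d \<in> demands Ns K" "s \<le> nd K d"
proof -
  obtain T where T: "T \<subseteq> Ns" "card T = s"
    using obtain_subset_with_card_n[OF assms(2)] by blast
  obtain f where f: "bij_betw f {..<s} T"
    using ex_bij_betw_nat_finite[of T] T fin by (auto simp: atLeast0LessThan finite_subset)
  obtain n0 where n0: "n0 \<in> Ns" using assms(4) by blast
  define d where "d = (\<lambda>k\<in>{..<K}. if k < s then f k else n0)"
  have "d \<in> demands Ns K"
    using f T(1) n0 by (auto simp: d_def demands_def bij_betw_def image_subset_iff)
  moreover have "T \<subseteq> d ` {..<K}"
  proof
    fix t assume "t \<in> T"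
    then obtain k where "k < s" "t = f k" using f by (auto simp: bij_betw_def)
    then show "t \<in> d ` {..<K}" using \<open>s \<le> K\<close> by (auto simp: d_def image_iff intro: bexI[of _ k])
  qed
  then have "s \<le> nd K d"
    unfolding nd_def using T(2) by (metis card_mono finite_imageI finite_lessThan)
  ultimately show thesis by (rule that)
qed

lemma mult_Inf_le_Inf_of_scaled:
  fixes P :: real
  assumes "0 < P" and "S \<noteq> {}" and "bdd_below T" and "\<And>R. R \<in> S \<Longrightarrow> R / P \<in> T"
  shows "P * Inf T \<le> Inf S"
proof (rule cInf_greatest[OF \<open>S \<noteq> {}\<close>])
  fix R assume "R \<in> S"
  then have "Inf T \<le> R / P"
    using assms(3,4) by (intro cInf_lower)
  then show "P * Inf T \<le> R"
    using \<open>0 < P\<close> by (simp add: field_simps)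
qed

theorem lemma1:
  fixes M :: real and N K s :: nat
  assumes "K \<ge> 1" and "M \<ge> 0" and "1 \<le> s" and "s \<le> min N K"
  shows "Rbar M {1..N} K \<ge>
           (real (card {d \<in> demands {1..N} K. nd K d \<ge> s}) / real (card (demands {1..N} K)))
           * Rbar_s M {1..N} s s"
proof -
  obtain d0 where d0: "d0 \<in> demands {1..N} K" "s \<le> nd K d0"
    using ex_demand_nd_ge[of "{1..N}" s K] assms by auto
  have "(real (card {d \<in> demands {1..N} K. nd K d \<ge> s}) / real (card (demands {1..N} K)))
          * Inf {R. achievable M {1..N} s (distinct_demands {1..N} s) R}
        \<le> Inf {R. achievable M {1..N} K (demands {1..N} K) R}"
  proof (rule mult_Inf_le_Inf_of_scaled)
    show "0 < real (card {d \<in> demands {1..N} K. nd K d \<ge> s}) / real (card (demands {1..N} K))"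
      using nd_ge_fraction_pos[OF _ d0] by simp
    show "{R. achievable M {1..N} K (demands {1..N} K) R} \<noteq> {}"
      using achievable_uncoded[OF \<open>M \<ge> 0\<close> order_refl] by blast
    show "bdd_below {R. achievable M {1..N} s (distinct_demands {1..N} s) R}"
      by (rule bdd_belowI[of _ 0]) (auto dest: achievable_nonneg)
  qed (use achievable_distinct_demands[OF _ d0] in simp)
  then show ?thesis
    by (simp add: Rbar_def Rbar_s_def opt_rate_def distinct_demands_eq_nd)
qed

end
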